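(* Under the standing assumptions, suppose $\varphi$ is lower semicontinuous on $X$. Let $\rho_k\to\infty$ and $\sigma_k\to 0$ with $\rho_k,\sigma_k>0$. Then for every sequence $\{x_k\}\subset X$ with $x_k\to\bar x$, $$\liminf_{k\to\infty}\varphi_{\rho_k,\sigma_k}(x_k)\ge\varphi(\bar x).$$
   Context: Standing assumptions: $X\subset\mathbb{R}^n$ and $Y\subset\mathbb{R}^m$ are nonempty, convex and compact. $f:X\times Y\to\mathbb{R}$ is continuously differentiable with Lipschitz continuous gradient on $X\times Y$, $f(x,\cdot)$ concave on $Y$. $c=(c_1,\dots,c_p)$ has continuously differentiable components with Lipschitz gradients, each $c_i(x,\cdot)$ convex on $Y$. For every $x\in X$, $\Theta(x):=\{y\in Y: c(x,y)\le 0\}\neq\emptyset$. Notation: $[z]_+=\max\{z,0\}$ componentwise; $\varphi(x):=\max\{f(x,y): y\in\Theta(x)\}$; $\psi_{\rho,\sigma}(x,y):=f(x,y)-\frac{\rho}{2}\|[c(x,y)]_+\|^2-\frac{\sigma}{2}\|y\|^2$; $\varphi_{\rho,\sigma}(x):=\max_{y\in Y}\psi_{\rho,\sigma}(x,y)$. *)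

theory Defs
  imports "HOL-Analysis.Analysis"
begin

text \<open>Constraint map c = (c_0,...,c_{p-1}) is represented by c :: nat => 'a => 'b => real,
  with components indexed by i < p.\<close>

definition Theta :: "'b set \<Rightarrow> nat \<Rightarrow> (nat \<Rightarrow> 'a \<Rightarrow> 'b \<Rightarrow> real) \<Rightarrow> 'a \<Rightarrow> 'b set" where
  "Theta Y p c x = {y \<in> Y. \<forall>i<p. c i x y \<le> 0}"

definition phi :: "('a \<Rightarrow> 'b \<Rightarrow> real) \<Rightarrow> 'b set \<Rightarrow> nat \<Rightarrow> (nat \<Rightarrow> 'a \<Rightarrow> 'b \<Rightarrow> real) \<Rightarrow> 'a \<Rightarrow> real" where
  "phi f Y p c x = Sup (f x ` Theta Y p c x)"

definition psi :: "('a \<Rightarrow> 'b::real_normed_vector \<Rightarrow> real) \<Rightarrow> nat \<Rightarrow> (nat \<Rightarrow> 'a \<Rightarrow> 'b \<Rightarrow> real)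
    \<Rightarrow> real \<Rightarrow> real \<Rightarrow> 'a \<Rightarrow> 'b \<Rightarrow> real" where
  "psi f p c \<rho> \<sigma> x y = f x y - \<rho> / 2 * (\<Sum>i<p. (max (c i x y) 0)\<^sup>2) - \<sigma> / 2 * (norm y)\<^sup>2"

definition phi_pen :: "('a \<Rightarrow> 'b::real_normed_vector \<Rightarrow> real) \<Rightarrow> 'b set \<Rightarrow> nat \<Rightarrow> (nat \<Rightarrow> 'a \<Rightarrow> 'b \<Rightarrow> real)
    \<Rightarrow> real \<Rightarrow> real \<Rightarrow> 'a \<Rightarrow> real" where
  "phi_pen f Y p c \<rho> \<sigma> x = Sup (psi f p c \<rho> \<sigma> x ` Y)"

definition lsc_on :: "'a::metric_space set \<Rightarrow> ('a \<Rightarrow> real) \<Rightarrow> bool" where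
  "lsc_on X g \<longleftrightarrow> (\<forall>x\<in>X. \<forall>e>0. \<exists>d>0. \<forall>x'\<in>X. dist x' x < d \<longrightarrow> g x - e < g x')"

end

theory Submission
  imports Defs
begin

text \<open>On the feasible set \<open>\<Theta>(x)\<close> the penalty term vanishes, so with \<open>B\<close> a bound for the norm
  on \<open>Y\<close> we get \<open>\<phi>\<^sub>\<rho>\<^sub>,\<^sub>\<sigma>(x) \<ge> \<phi>(x) - \<sigma> B\<^sup>2 / 2\<close> for every \<open>\<rho> \<ge> 0\<close>. Along the sequence
  the error \<open>\<sigma>\<^sub>k B\<^sup>2 / 2\<close> tends to zero, and lower semicontinuity of \<open>\<phi>\<close> at the limit
  bounds \<open>\<phi>(x\<^sub>k)\<close> from below.\<close>

lemma psi_le_f: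
  assumes "\<rho> \<ge> 0" "\<sigma> \<ge> 0"
  shows "psi f p c \<rho> \<sigma> x y \<le> f x y"
proof -
  have "0 \<le> \<rho> / 2 * (\<Sum>i<p. (max (c i x y) 0)\<^sup>2)"
    using assms(1) by (intro mult_nonneg_nonneg sum_nonneg) auto
  moreover have "0 \<le> \<sigma> / 2 * (norm y)\<^sup>2"
    using assms(2) by simp
  ultimately show ?thesis
    unfolding psi_def by linarith
qed

lemma psi_on_Theta:
  assumes "y \<in> Theta Y p c x"
  shows "psi f p c \<rho> \<sigma> x y = f x y - \<sigma> / 2 * (norm y)\<^sup>2"
proof -
  have "(\<Sum>i<p. (max (c i x y) 0)\<^sup>2) = 0"
    using assms unfolding Theta_def by (intro sum.neutral) (simp add: max_def)
  then show ?thesis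
    unfolding psi_def by simp
qed

lemma phi_le_phi_pen:
  fixes Y :: "'b::real_normed_vector set"
  assumes bdd: "bdd_above (f x ` Y)"
    and feasible: "Theta Y p c x \<noteq> {}"
    and norm_bound: "\<And>y. y \<in> Y \<Longrightarrow> norm y \<le> B"
    and "\<rho> \<ge> 0" "\<sigma> \<ge> 0"
  shows "phi f Y p c x - \<sigma> / 2 * B\<^sup>2 \<le> phi_pen f Y p c \<rho> \<sigma> x"
proof -
  obtain M where "\<And>y. y \<in> Y \<Longrightarrow> f x y \<le> M"
    using bdd by (auto simp: bdd_above_def)
  then have bdd_psi: "bdd_above (psi f p c \<rho> \<sigma> x ` Y)"
    using psi_le_f[OF \<open>\<rho> \<ge> 0\<close> \<open>\<sigma> \<ge> 0\<close>] by (intro bdd_aboveI2) (rule order_trans)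
  have "f x y \<le> phi_pen f Y p c \<rho> \<sigma> x + \<sigma> / 2 * B\<^sup>2" if y: "y \<in> Theta Y p c x" for y
  proof -
    have "y \<in> Y"
      using y unfolding Theta_def by simp
    then have "\<sigma> / 2 * (norm y)\<^sup>2 \<le> \<sigma> / 2 * B\<^sup>2"
      using norm_bound \<open>\<sigma> \<ge> 0\<close> by (intro mult_left_mono power_mono) auto
    moreover have "psi f p c \<rho> \<sigma> x y \<le> phi_pen f Y p c \<rho> \<sigma> x"
      unfolding phi_pen_def using bdd_psi \<open>y \<in> Y\<close> by (rule cSUP_upper2) simp
    ultimately show ?thesis
      using psi_on_Theta[OF y, of f \<rho> \<sigma>] by linarith
  qed
  then have "phi f Y p c x \<le> phi_pen f Y p c \<rho> \<sigma> x + \<sigma> / 2 * B\<^sup>2"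
    unfolding phi_def using feasible by (intro cSUP_least) auto
  then show ?thesis
    by simp
qed

lemma lsc_on_eventually_gt:
  assumes "lsc_on X g" "\<And>k. x k \<in> X" "x \<longlonglongrightarrow> xbar" "xbar \<in> X" "e > 0"
  shows "eventually (\<lambda>k. g xbar - e < g (x k)) sequentially"
proof -
  obtain d where "d > 0" and d: "\<And>x'. x' \<in> X \<Longrightarrow> dist x' xbar < d \<Longrightarrow> g xbar - e < g x'"
    using assms(1,4,5) unfolding lsc_on_def by blast
  have "eventually (\<lambda>k. dist (x k) xbar < d) sequentially"
    using assms(3) \<open>d > 0\<close> tendsto_iff by blast
  then show ?thesis
    by eventually_elim (use d assms(2) in blast)
qed

lemma ereal_le_liminf_of_eventually_gt:
  assumes "\<And>e. e > 0 \<Longrightarrow> eventually (\<lambda>k. a - e < u k) F"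
  shows "ereal a \<le> Liminf F (\<lambda>k. ereal (u k))"
proof (subst le_Liminf_iff, intro allI impI)
  fix y assume "y < ereal a"
  then show "eventually (\<lambda>k. y < ereal (u k)) F"
  proof (cases y)
    case (real r)
    then show ?thesis
      using assms[of "a - r"] \<open>y < ereal a\<close> by simp
  qed simp_all
qed

lemma liminf_ge_of_lsc_on:
  assumes "lsc_on X g" "\<And>k. x k \<in> X" "x \<longlonglongrightarrow> xbar" "xbar \<in> X"
    and lower: "\<And>k. g (x k) - \<epsilon> k \<le> h k" and "\<epsilon> \<longlonglongrightarrow> 0"
  shows "ereal (g xbar) \<le> liminf (\<lambda>k. ereal (h k))"
proof (rule ereal_le_liminf_of_eventually_gt)
  fix e :: real assume "e > 0"
  then have "eventually (\<lambda>k. g xbar - e / 2 < g (x k)) sequentially"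
    using lsc_on_eventually_gt[OF assms(1-4)] by simp
  moreover have "eventually (\<lambda>k. \<epsilon> k < e / 2) sequentially"
    using order_tendstoD(2)[OF \<open>\<epsilon> \<longlonglongrightarrow> 0\<close>, of "e / 2"] \<open>e > 0\<close> by simp
  ultimately show "eventually (\<lambda>k. g xbar - e < h k) sequentially"
  proof eventually_elim
    case (elim k)
    then show ?case
      using lower[of k] by linarith
  qed
qed

theorem lemma2p3:
  fixes X :: "'a::euclidean_space set" and Y :: "'b::euclidean_space set"
    and f :: "'a \<Rightarrow> 'b \<Rightarrow> real" and p :: nat and c :: "nat \<Rightarrow> 'a \<Rightarrow> 'b \<Rightarrow> real"
    and Df :: "'a \<times> 'b \<Rightarrow> 'a \<times> 'b" and Dc :: "nat \<Rightarrow> 'a \<times> 'b \<Rightarrow> 'a \<times> 'b"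
    and Lf :: real and Lc :: real
    and \<rho> \<sigma> :: "nat \<Rightarrow> real" and x :: "nat \<Rightarrow> 'a" and xbar :: 'a
  assumes X: "X \<noteq> {}" "convex X" "compact X"
    and Y: "Y \<noteq> {}" "convex Y" "compact Y"
    and f_diff: "\<And>z. z \<in> X \<times> Y \<Longrightarrow>
       ((\<lambda>w. f (fst w) (snd w)) has_derivative (\<lambda>h. Df z \<bullet> h)) (at z)"
    and f_lip: "Lf-lipschitz_on (X \<times> Y) Df"
    and f_concave: "\<And>u. u \<in> X \<Longrightarrow> concave_on Y (f u)"
    and c_diff: "\<And>i z. i < p \<Longrightarrow> z \<in> X \<times> Y \<Longrightarrow>
       ((\<lambda>w. c i (fst w) (snd w)) has_derivative (\<lambda>h. Dc i z \<bullet> h)) (at z)"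
    and c_lip: "\<And>i. i < p \<Longrightarrow> Lc-lipschitz_on (X \<times> Y) (Dc i)"
    and c_convex: "\<And>i u. i < p \<Longrightarrow> u \<in> X \<Longrightarrow> convex_on Y (c i u)"
    and Theta_ne: "\<And>u. u \<in> X \<Longrightarrow> Theta Y p c u \<noteq> {}"
    and lsc: "lsc_on X (phi f Y p c)"
    and rho: "filterlim \<rho> at_top sequentially" "\<And>k. \<rho> k > 0"
    and sigma: "\<sigma> \<longlonglongrightarrow> 0" "\<And>k. \<sigma> k > 0"
    and xk: "\<And>k. x k \<in> X" "x \<longlonglongrightarrow> xbar"
  shows "liminf (\<lambda>k. ereal (phi_pen f Y p c (\<rho> k) (\<sigma> k) (x k))) \<ge> ereal (phi f Y p c xbar)"
proof -
  have "xbar \<in> X"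
    using xk compact_imp_closed[OF X(3)] closed_sequentially by blast
  have "continuous_on (X \<times> Y) (\<lambda>w. f (fst w) (snd w))"
    using f_diff has_derivative_continuous by (blast intro: continuous_at_imp_continuous_on)
  then have "bounded ((\<lambda>w. f (fst w) (snd w)) ` (X \<times> Y))"
    by (intro compact_imp_bounded compact_continuous_image compact_Times X(3) Y(3))
  then obtain M where "\<And>u y. u \<in> X \<Longrightarrow> y \<in> Y \<Longrightarrow> \<bar>f u y\<bar> \<le> M"
    by (fastforce simp: bounded_real)
  then have bdd_f: "bdd_above (f u ` Y)" if "u \<in> X" for u
    using that by (intro bdd_aboveI2) (rule abs_le_D1)
  obtain B where B: "\<And>y. y \<in> Y \<Longrightarrow> norm y \<le> B"
    using compact_imp_bounded[OF Y(3)] bounded_iff by blast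
  have lower: "phi f Y p c (x k) - \<sigma> k / 2 * B\<^sup>2 \<le> phi_pen f Y p c (\<rho> k) (\<sigma> k) (x k)" for k
    using phi_le_phi_pen[where f = f and x = "x k" and \<rho> = "\<rho> k" and \<sigma> = "\<sigma> k",
        OF bdd_f[OF xk(1)] Theta_ne[OF xk(1)] B]
      rho(2) sigma(2) by (simp add: less_imp_le)
  have "(\<lambda>k. \<sigma> k / 2 * B\<^sup>2) \<longlonglongrightarrow> 0"
    using tendsto_mult_left_zero[OF tendsto_divide_zero[OF sigma(1)]] by simp
  then show ?thesis
    by (rule liminf_ge_of_lsc_on[OF lsc xk \<open>xbar \<in> X\<close> lower])
qed

end
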